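(* For every $n\in\mathbb{N}$ and $\varepsilon\in(0,1)$, the set $\mathsf{PAULI}_n$ of $n$-qubit Pauli channels admits a uniformly $\varepsilon$-approximate sample compression scheme of size $\mathcal{O}\big(\frac{n}{\varepsilon^2}\big)$. This sample compression scheme even succeeds on training data whose labels have been corrupted by adversarial label noise of strength $\varepsilon/3$: for every $\mathcal{P}\in\mathsf{PAULI}_n$ and every finite sample $S=\{(E^{(i)},y_i)\}_{i=1}^m$ with $|y_i-f_{\mathcal{P}}(E^{(i)})|\leq\varepsilon/3$ for all $i$, the reconstructed function $\hat f=\rho(\kappa(S))$ satisfies $|\hat f(E^{(i)})-f_{\mathcal{P}}(E^{(i)})|\leq\varepsilon$ for all $i$.
   Context: $\mathsf{X}$ is the set of channel test operators on two $n$-qubit systems $A,B$: $E_{A,B}\geq0$ with $E_{A,B}\leq\sigma_A\otimes\mathbb{1}_B$ for some density operator $\sigma_A$. An $n$-qubit Pauli channel is $\mathcal{P}(\rho)=\sum_{\vec z,\vec x}p_{\vec z,\vec x}P^{\vec z,\vec x}\rho P^{\vec z,\vec x\dagger}$ ($P^{\vec z,\vec x}=\mathrm{i}^{\vec z\cdot\vec x}Z^{\vec z}X^{\vec x}$, $(p_{\vec z,\vec x})$ a probability vector), identified with $f_{\mathcal{P}}:\mathsf{X}\to[0,1]$, $f_{\mathcal{P}}(E)=\mathrm{Tr}[E\,C^{\mathcal{P}}_{A,B}]$, with Choi matrix $C^{\mathcal{P}}_{A,B}=\sum_{i,j}|i\rangle\langle j|\otimes\mathcal{P}(|i\rangle\langle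 j|)$. A uniformly $\varepsilon$-approximate sample compression scheme of size $k$ for a class $\mathcal{F}\subseteq[0,1]^{\mathsf{X}}$ is a pair of maps: a compression map $\kappa$ sending each finite sample $S\subseteq\mathsf{X}\times[0,1]$ to a subsample $\kappa(S)\subseteq S$ of size at most $k$, and a reconstruction map $\rho$ sending such subsamples to functions $\mathsf{X}\to[0,1]$, such that for all $f\in\mathcal{F}$ and all $S=\{(x_i,f(x_i))\}_{i=1}^m$ we have $\max_i|\rho(\kappa(S))(x_i)-f(x_i)|\leq\varepsilon$. *)

theory Defs
  imports "Jordan_Normal_Form.Schur_Decomposition"
begin

text \<open>Kronecker (tensor) product; the left factor is the most significant index.\<close>
definition kron :: "complex mat \<Rightarrow> complex mat \<Rightarrow> complex mat" where
  "kron A B = mat (dim_row A * dim_row B) (dim_col A * dim_col B)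
     (\<lambda>(i,j). A $$ (i div dim_row B, j div dim_col B) * B $$ (i mod dim_row B, j mod dim_col B))"

definition mat_trace :: "complex mat \<Rightarrow> complex" where
  "mat_trace A = (\<Sum>i < dim_row A. A $$ (i, i))"

definition msum :: "nat \<Rightarrow> ('i \<Rightarrow> complex mat) \<Rightarrow> 'i set \<Rightarrow> complex mat" where
  "msum d F I = mat d d (\<lambda>ij. \<Sum>k \<in> I. F k $$ ij)"

definition psd :: "nat \<Rightarrow> complex mat \<Rightarrow> bool" where
  "psd d A \<longleftrightarrow> A \<in> carrier_mat d d \<and> mat_adjoint A = A \<and>
     (\<forall>v \<in> carrier_vec d. 0 \<le> Re ((A *\<^sub>v v) \<bullet>c v))"

definition loewner_le :: "nat \<Rightarrow> complex mat \<Rightarrow> complex mat \<Rightarrow> bool" where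
  "loewner_le d A B \<longleftrightarrow> A \<in> carrier_mat d d \<and> B \<in> carrier_mat d d \<and> psd d (B - A)"

definition density_op :: "nat \<Rightarrow> complex mat \<Rightarrow> bool" where
  "density_op d \<sigma> \<longleftrightarrow> psd d \<sigma> \<and> mat_trace \<sigma> = 1"

definition test_ops :: "nat \<Rightarrow> complex mat set" where
  "test_ops n = {E. psd (2^n * 2^n) E \<and>
     (\<exists>\<sigma>. density_op (2^n) \<sigma> \<and> loewner_le (2^n * 2^n) E (kron \<sigma> (1\<^sub>m (2^n))))}"

definition pauli_X :: "complex mat" where
  "pauli_X = mat 2 2 (\<lambda>(i,j). if i \<noteq> j then 1 else 0)"

definition pauli_Z :: "complex mat" where
  "pauli_Z = mat 2 2 (\<lambda>(i,j). if i = j then (if i = 0 then 1 else -1) else 0)"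

fun ZX :: "bool list \<Rightarrow> bool list \<Rightarrow> complex mat" where
  "ZX (z # zs) (x # xs) =
     kron ((if z then pauli_Z else 1\<^sub>m 2) * (if x then pauli_X else 1\<^sub>m 2)) (ZX zs xs)"
| "ZX _ _ = 1\<^sub>m 1"

definition bdot :: "bool list \<Rightarrow> bool list \<Rightarrow> nat" where
  "bdot z x = length (filter (\<lambda>(a,b). a \<and> b) (zip z x))"

definition pauli_op :: "bool list \<Rightarrow> bool list \<Rightarrow> complex mat" where
  "pauli_op z x = (\<i> ^ bdot z x) \<cdot>\<^sub>m ZX z x"

definition pauli_idx :: "nat \<Rightarrow> (bool list \<times> bool list) set" where
  "pauli_idx n = {(z, x). length z = n \<and> length x = n}"

text \<open>The probability vectors parametrising n-qubit Pauli channels (PAULI_n).\<close>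
definition pauli_channels :: "nat \<Rightarrow> (bool list \<times> bool list \<Rightarrow> real) set" where
  "pauli_channels n = {p. (\<forall>zx \<in> pauli_idx n. 0 \<le> p zx) \<and> (\<Sum>zx \<in> pauli_idx n. p zx) = 1}"

definition pauli_apply :: "nat \<Rightarrow> (bool list \<times> bool list \<Rightarrow> real) \<Rightarrow> complex mat \<Rightarrow> complex mat" where
  "pauli_apply n p \<rho> = msum (2^n)
     (\<lambda>(z, x). complex_of_real (p (z, x)) \<cdot>\<^sub>m (pauli_op z x * \<rho> * mat_adjoint (pauli_op z x)))
     (pauli_idx n)"

definition ketbra :: "nat \<Rightarrow> nat \<Rightarrow> nat \<Rightarrow> complex mat" where
  "ketbra d i j = mat d d (\<lambda>(a,b). if a = i \<and> b = j then 1 else 0)"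

definition choi :: "nat \<Rightarrow> (bool list \<times> bool list \<Rightarrow> real) \<Rightarrow> complex mat" where
  "choi n p = msum (2^n * 2^n)
     (\<lambda>(i, j). kron (ketbra (2^n) i j) (pauli_apply n p (ketbra (2^n) i j)))
     ({..<2^n} \<times> {..<2^n})"

text \<open>f_P(E) = Tr[E C^P] (real for test operators; we take the real part).\<close>
definition f_pauli :: "nat \<Rightarrow> (bool list \<times> bool list \<Rightarrow> real) \<Rightarrow> complex mat \<Rightarrow> real" where
  "f_pauli n p E = Re (mat_trace (E * choi n p))"

end

theory Submission
  imports Defs "HOL-Analysis.Convex"
begin

text \<open>
  Writing P_a for the Pauli operators, the Choi matrix of the Pauli channel with weights p is
  \<Sum>a. p a |w a\<rangle>\<langle>w a| with the Bell vectors w a = (1 \<otimes> P_a) \<Sum>i. |i\<rangle>|i\<rangle>, so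
  f_P(E) = \<Sum>a. p a \<langle>w a|E|w a\<rangle> is a convex combination of the 4^n features \<langle>w a|E|w a\<rangle>.
  For a test operator E \<le> \<sigma> \<otimes> 1 these features lie in [0, 1], because P_a is unitary and hence
  \<langle>w a|\<sigma> \<otimes> 1|w a\<rangle> = Tr \<sigma> = 1.

  Convex combinations of N features with values in [0, 1] admit a compression scheme driven by
  entropy. Keep a weight vector q of (nearly) maximal entropy among those fitting the kept
  examples up to \<delta>; while some example of the sample is fitted worse than 2\<delta>, add it to the kept
  ones. The new fit q' differs from q by more than \<delta> at that example, so by Cauchy-Schwarz the
  weighted squared distance \<Sum>a. (q a - q' a)^2 / (q a + q' a) exceeds \<delta>^2/2, and strong convexity of
  x ln x at the midpoint of q and q' (still a fit of the old examples) raises the minimal negative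
  entropy by \<delta>^2/16. Negative entropy ranges over [-ln N, 0], so after 16 ln N / \<delta>^2 rounds no
  example is fitted worse than 2\<delta>, and the clipped prediction of the final fit is within 3\<delta> of a
  channel that fits the sample up to \<delta>. With \<delta> = \<epsilon>/3 and N = 4^n this keeps at most
  144 n ln 4 / \<epsilon>^2 \<le> 432 n / \<epsilon>^2 examples.
\<close>

section \<open>Entropy inequalities\<close>

lemma mult_ln_divide:
  fixes u v :: real
  assumes "0 \<le> u" and "0 < v"
  shows "u * ln (u / v) = u * ln u - u * ln v"
  using assms by (cases "u = 0") (simp_all add: ln_div algebra_simps)

lemma relative_entropy_term_nonneg:
  fixes u v :: real
  assumes u: "0 \<le> u" and v: "0 < v"
  shows "0 \<le> u * ln (u / v) - u + v"
proof (cases "u = 0")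
  case True
  then show ?thesis using v by simp
next
  case False
  with u have u: "0 < u" by simp
  have "u * ln (v / u) \<le> u * (v / u - 1)"
    using u v by (intro mult_left_mono ln_le_minus_one) auto
  also have "\<dots> = v - u"
    using u by (simp add: field_simps)
  finally show ?thesis
    using u v by (simp add: ln_div algebra_simps)
qed

lemma relative_entropy_term_ge_quadratic:
  fixes u v :: real
  assumes u: "0 \<le> u" and uv: "u \<le> v"
  shows "(v - u)\<^sup>2 / (2 * v) \<le> u * ln (u / v) - u + v"
proof (cases "u = 0")
  case True
  then show ?thesis
    using uv by (cases "v = 0") (simp_all add: power2_eq_square)
next
  case False
  with u uv have v0: "0 < v" by simp
  let ?g = "\<lambda>t. t * ln (t / v) - t + v - (v - t)\<^sup>2 / (2 * v)"
  have "?g v \<le> ?g u"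
  proof (rule DERIV_nonpos_imp_nonincreasing[OF uv])
    fix t
    assume t: "u \<le> t" "t \<le> v"
    with u False have t0: "0 < t" by simp
    have "DERIV ?g t :> ln (t / v) + (v - t) / v"
      using t0 v0 by (auto intro!: derivative_eq_intros simp: field_simps power2_eq_square)
    moreover have "ln (t / v) + (v - t) / v \<le> 0"
      using ln_le_minus_one[of "t / v"] t0 v0 by (simp add: field_simps)
    ultimately show "\<exists>y. DERIV ?g t :> y \<and> y \<le> 0" by blast
  qed
  then show ?thesis using v0 by simp
qed

lemma xlnx_midpoint_strong_convexity:
  fixes a b :: real
  assumes a: "0 \<le> a" and b: "0 \<le> b"
  shows "(a - b)\<^sup>2 / (4 * (a + b)) \<le> a * ln a + b * ln b - 2 * ((a + b) / 2 * ln ((a + b) / 2))"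
proof (cases "a + b = 0")
  case True
  with a b have "a = 0" "b = 0" by auto
  then show ?thesis by simp
next
  case False
  define m where "m = (a + b) / 2"
  have m: "0 < m"
    using a b False unfolding m_def by simp
  have quad: "(a - b)\<^sup>2 / (4 * (a + b)) = (m - a)\<^sup>2 / (2 * m)"
    "(a - b)\<^sup>2 / (4 * (a + b)) = (m - b)\<^sup>2 / (2 * m)"
    using False unfolding m_def by (simp_all add: field_simps power2_eq_square)
  have "(a - b)\<^sup>2 / (4 * (a + b)) \<le> (a * ln (a / m) - a + m) + (b * ln (b / m) - b + m)"
  proof (cases "a \<le> b")
    case True
    then have "a \<le> m" unfolding m_def by simp
    with relative_entropy_term_ge_quadratic[OF a] relative_entropy_term_nonneg[OF b m]
    show ?thesis unfolding quad(1) by fastforce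
  next
    case False
    then have "b \<le> m" unfolding m_def by simp
    with relative_entropy_term_ge_quadratic[OF b] relative_entropy_term_nonneg[OF a m]
    show ?thesis unfolding quad(2) by fastforce
  qed
  also have "\<dots> = a * ln a + b * ln b - (a + b) * ln m - (a + b) + 2 * m"
    using mult_ln_divide[OF a m] mult_ln_divide[OF b m] by (simp add: algebra_simps)
  also have "\<dots> = a * ln a + b * ln b - 2 * (m * ln m)"
    unfolding m_def by (simp add: field_simps)
  finally show ?thesis unfolding m_def .
qed

section \<open>Compression schemes for mixtures of bounded features\<close>

definition prob_simplex :: "'a set \<Rightarrow> ('a \<Rightarrow> real) set" where
  "prob_simplex A = {q. (\<forall>a\<in>A. 0 \<le> q a) \<and> sum q A = 1}"

definition mixture :: "'a set \<Rightarrow> ('x \<Rightarrow> 'a \<Rightarrow> real) \<Rightarrow> ('a \<Rightarrow> real) \<Rightarrow> 'x \<Rightarrow> real" where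
  "mixture A c q x = (\<Sum>a\<in>A. q a * c x a)"

definition neg_entropy :: "'a set \<Rightarrow> ('a \<Rightarrow> real) \<Rightarrow> real" where
  "neg_entropy A q = (\<Sum>a\<in>A. q a * ln (q a))"

lemma prob_simplex_le_one:
  assumes "finite A" and "q \<in> prob_simplex A" and "a \<in> A"
  shows "q a \<le> 1"
proof -
  have "q a \<le> sum q A"
    using assms by (intro member_le_sum) (auto simp: prob_simplex_def)
  then show ?thesis
    using assms(2) by (simp add: prob_simplex_def)
qed

lemma neg_entropy_nonpos:
  assumes "finite A" and q: "q \<in> prob_simplex A"
  shows "neg_entropy A q \<le> 0"
  unfolding neg_entropy_def
proof (rule sum_nonpos)
  fix a
  assume a: "a \<in> A"
  have "0 \<le> q a" and "q a \<le> 1"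
    using q a prob_simplex_le_one[OF assms a] by (auto simp: prob_simplex_def)
  then show "q a * ln (q a) \<le> 0"
    by (cases "q a = 0") (auto intro: mult_nonneg_nonpos)
qed

lemma neg_entropy_ge_minus_ln_card:
  assumes A: "finite A" "A \<noteq> {}" and q: "q \<in> prob_simplex A"
  shows "- ln (card A) \<le> neg_entropy A q"
proof -
  define N where "N = real (card A)"
  have N: "0 < N"
    using A unfolding N_def by (simp add: card_gt_0_iff)
  have q0: "\<And>a. a \<in> A \<Longrightarrow> 0 \<le> q a" and q1: "sum q A = 1"
    using q by (auto simp: prob_simplex_def)
  have "0 \<le> (\<Sum>a\<in>A. q a * ln (q a / (1 / N)) - q a + 1 / N)"
    using q0 N by (intro sum_nonneg relative_entropy_term_nonneg) auto
  also have "\<dots> = (\<Sum>a\<in>A. q a * ln (q a) + q a * ln N - q a + 1 / N)"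
  proof (intro sum.cong refl)
    fix a
    assume "a \<in> A"
    then have "q a * ln (q a / (1 / N)) = q a * ln (q a) - q a * ln (1 / N)"
      using q0 N by (intro mult_ln_divide) auto
    then show "q a * ln (q a / (1 / N)) - q a + 1 / N = q a * ln (q a) + q a * ln N - q a + 1 / N"
      using N by (simp add: ln_div)
  qed
  also have "\<dots> = neg_entropy A q + ln N"
    using q1 N unfolding neg_entropy_def N_def
    by (simp add: sum.distrib sum_subtractf sum_distrib_right[symmetric] mult.commute)
  finally show ?thesis
    unfolding N_def by simp
qed

lemma neg_entropy_midpoint_gap:
  assumes "\<forall>a\<in>A. 0 \<le> q a" and "\<forall>a\<in>A. 0 \<le> q' a"
  shows "(\<Sum>a\<in>A. (q a - q' a)\<^sup>2 / (q a + q' a)) / 4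
    \<le> neg_entropy A q + neg_entropy A q' - 2 * neg_entropy A (\<lambda>a. (q a + q' a) / 2)"
proof -
  have "(\<Sum>a\<in>A. (q a - q' a)\<^sup>2 / (q a + q' a)) / 4 = (\<Sum>a\<in>A. (q a - q' a)\<^sup>2 / (4 * (q a + q' a)))"
    by (simp add: sum_divide_distrib divide_divide_eq_left mult.commute)
  also have "\<dots> \<le> (\<Sum>a\<in>A. q a * ln (q a) + q' a * ln (q' a)
      - 2 * ((q a + q' a) / 2 * ln ((q a + q' a) / 2)))"
    using assms by (intro sum_mono xlnx_midpoint_strong_convexity) auto
  also have "\<dots> = neg_entropy A q + neg_entropy A q' - 2 * neg_entropy A (\<lambda>a. (q a + q' a) / 2)"
    unfolding neg_entropy_def by (simp add: sum.distrib sum_subtractf sum_distrib_left)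
  finally show ?thesis .
qed

lemma mixture_diff_squared_le:
  assumes q: "q \<in> prob_simplex A" and q': "q' \<in> prob_simplex A"
    and c: "\<forall>a\<in>A. 0 \<le> c x a \<and> c x a \<le> 1"
  shows "(mixture A c q x - mixture A c q' x)\<^sup>2 \<le> 2 * (\<Sum>a\<in>A. (q a - q' a)\<^sup>2 / (q a + q' a))"
proof -
  define s where "s a = q a + q' a" for a
  have q0: "\<And>a. a \<in> A \<Longrightarrow> 0 \<le> q a \<and> 0 \<le> q' a"
    using q q' by (auto simp: prob_simplex_def)
  then have s0: "\<And>a. a \<in> A \<Longrightarrow> 0 \<le> s a"
    unfolding s_def by (simp add: add_nonneg_nonneg)
  have "mixture A c q x - mixture A c q' x = (\<Sum>a\<in>A. (q a - q' a) / sqrt (s a) * (sqrt (s a) * c x a))"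
    unfolding mixture_def sum_subtractf[symmetric]
  proof (intro sum.cong refl)
    fix a
    assume a: "a \<in> A"
    show "q a * c x a - q' a * c x a = (q a - q' a) / sqrt (s a) * (sqrt (s a) * c x a)"
    proof (cases "s a = 0")
      case True
      then have "q a = 0" "q' a = 0"
        using q0[OF a] unfolding s_def by auto
      then show ?thesis by simp
    qed (use s0[OF a] in \<open>simp add: field_simps\<close>)
  qed
  also have "(\<dots>)\<^sup>2 \<le> (\<Sum>a\<in>A. ((q a - q' a) / sqrt (s a))\<^sup>2) * (\<Sum>a\<in>A. (sqrt (s a) * c x a)\<^sup>2)"
    by (rule Cauchy_Schwarz_ineq_sum)
  also have "\<dots> = (\<Sum>a\<in>A. (q a - q' a)\<^sup>2 / (q a + q' a)) * (\<Sum>a\<in>A. s a * (c x a)\<^sup>2)"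
    using s0 by (intro arg_cong2[where f = "(*)"] sum.cong refl) (auto simp: power_divide power_mult_distrib s_def)
  also have "\<dots> \<le> (\<Sum>a\<in>A. (q a - q' a)\<^sup>2 / (q a + q' a)) * 2"
  proof (rule mult_left_mono)
    have "(\<Sum>a\<in>A. s a * (c x a)\<^sup>2) \<le> (\<Sum>a\<in>A. s a)"
      using s0 c by (intro sum_mono mult_left_le) (auto simp: power_le_one)
    also have "\<dots> = 2"
      using q q' unfolding s_def prob_simplex_def by (simp add: sum.distrib)
    finally show "(\<Sum>a\<in>A. s a * (c x a)\<^sup>2) \<le> 2" .
    show "0 \<le> (\<Sum>a\<in>A. (q a - q' a)\<^sup>2 / (q a + q' a))"
      using s0 unfolding s_def by (intro sum_nonneg) auto
  qed
  finally show ?thesis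
    by (simp add: mult.commute)
qed

definition version_space ::
    "'a set \<Rightarrow> ('x \<Rightarrow> 'a \<Rightarrow> real) \<Rightarrow> real \<Rightarrow> ('x \<times> real) set \<Rightarrow> ('a \<Rightarrow> real) set" where
  "version_space A c \<delta> T = {q \<in> prob_simplex A. \<forall>(x, y)\<in>T. \<bar>mixture A c q x - y\<bar> \<le> \<delta>}"

text \<open>An approximate minimiser of the negative entropy suffices.\<close>
definition max_entropy_fit ::
    "'a set \<Rightarrow> ('x \<Rightarrow> 'a \<Rightarrow> real) \<Rightarrow> real \<Rightarrow> ('x \<times> real) set \<Rightarrow> 'a \<Rightarrow> real" where
  "max_entropy_fit A c \<delta> T = (SOME q. q \<in> version_space A c \<delta> T \<and>
     neg_entropy A q < Inf (neg_entropy A ` version_space A c \<delta> T) + \<delta>\<^sup>2 / 32)"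

definition misfit :: "'a set \<Rightarrow> ('x \<Rightarrow> 'a \<Rightarrow> real) \<Rightarrow> real \<Rightarrow> ('x \<times> real) set \<Rightarrow> 'x \<times> real \<Rightarrow> bool" where
  "misfit A c \<delta> T z \<longleftrightarrow> 2 * \<delta> < \<bar>mixture A c (max_entropy_fit A c \<delta> T) (fst z) - snd z\<bar>"

definition compress_step ::
    "'a set \<Rightarrow> ('x \<Rightarrow> 'a \<Rightarrow> real) \<Rightarrow> real \<Rightarrow> ('x \<times> real) set \<Rightarrow> ('x \<times> real) set \<Rightarrow> ('x \<times> real) set" where
  "compress_step A c \<delta> S T =
     (if \<exists>z\<in>S. misfit A c \<delta> T z then insert (SOME z. z \<in> S \<and> misfit A c \<delta> T z) T else T)"

definition compress_rounds :: "'a set \<Rightarrow> real \<Rightarrow> nat" where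
  "compress_rounds A \<delta> = nat \<lfloor>16 * ln (card A) / \<delta>\<^sup>2\<rfloor>"

definition compress :: "'a set \<Rightarrow> ('x \<Rightarrow> 'a \<Rightarrow> real) \<Rightarrow> real \<Rightarrow> ('x \<times> real) set \<Rightarrow> ('x \<times> real) set" where
  "compress A c \<delta> S = (compress_step A c \<delta> S ^^ compress_rounds A \<delta>) {}"

definition reconstruct :: "'a set \<Rightarrow> ('x \<Rightarrow> 'a \<Rightarrow> real) \<Rightarrow> real \<Rightarrow> ('x \<times> real) set \<Rightarrow> 'x \<Rightarrow> real" where
  "reconstruct A c \<delta> T x = max 0 (min 1 (mixture A c (max_entropy_fit A c \<delta> T) x))"

lemma version_space_antimono: "T \<subseteq> T' \<Longrightarrow> version_space A c \<delta> T' \<subseteq> version_space A c \<delta> T"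
  unfolding version_space_def by auto

lemma mixture_midpoint: "mixture A c (\<lambda>a. (q a + q' a) / 2) x = (mixture A c q x + mixture A c q' x) / 2"
  unfolding mixture_def by (simp add: sum_divide_distrib[symmetric] sum.distrib algebra_simps)

lemma version_space_midpoint:
  assumes "q \<in> version_space A c \<delta> T" and "q' \<in> version_space A c \<delta> T"
  shows "(\<lambda>a. (q a + q' a) / 2) \<in> version_space A c \<delta> T"
proof -
  have "(\<lambda>a. (q a + q' a) / 2) \<in> prob_simplex A"
    using assms unfolding version_space_def prob_simplex_def
    by (auto simp: sum_divide_distrib[symmetric] sum.distrib)
  moreover have "\<bar>mixture A c (\<lambda>a. (q a + q' a) / 2) x - y\<bar> \<le> \<delta>" if "(x, y) \<in> T" for x y
  proof -
    have "\<bar>mixture A c q x - y\<bar> \<le> \<delta>" "\<bar>mixture A c q' x - y\<bar> \<le> \<delta>"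
      using assms that unfolding version_space_def by auto
    then show ?thesis
      by (auto simp: mixture_midpoint abs_le_iff field_simps)
  qed
  ultimately show ?thesis
    unfolding version_space_def by auto
qed

lemma
  assumes "0 < \<delta>" and "version_space A c \<delta> T \<noteq> {}"
  shows max_entropy_fit_in_version_space: "max_entropy_fit A c \<delta> T \<in> version_space A c \<delta> T"
    and neg_entropy_max_entropy_fit_less_Inf:
      "neg_entropy A (max_entropy_fit A c \<delta> T) < Inf (neg_entropy A ` version_space A c \<delta> T) + \<delta>\<^sup>2 / 32"
proof -
  have "\<exists>q \<in> version_space A c \<delta> T. neg_entropy A q < Inf (neg_entropy A ` version_space A c \<delta> T) + \<delta>\<^sup>2 / 32"
    using assms cInf_lessD[of "neg_entropy A ` version_space A c \<delta> T"] by force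
  then have "max_entropy_fit A c \<delta> T \<in> version_space A c \<delta> T \<and>
      neg_entropy A (max_entropy_fit A c \<delta> T) < Inf (neg_entropy A ` version_space A c \<delta> T) + \<delta>\<^sup>2 / 32"
    unfolding max_entropy_fit_def by (rule someI2_bex) simp
  then show "max_entropy_fit A c \<delta> T \<in> version_space A c \<delta> T"
    and "neg_entropy A (max_entropy_fit A c \<delta> T) < Inf (neg_entropy A ` version_space A c \<delta> T) + \<delta>\<^sup>2 / 32"
    by auto
qed

lemma neg_entropy_max_entropy_fit_less:
  assumes A: "finite A" "A \<noteq> {}" and "0 < \<delta>" and q: "q \<in> version_space A c \<delta> T"
  shows "neg_entropy A (max_entropy_fit A c \<delta> T) < neg_entropy A q + \<delta>\<^sup>2 / 32"
proof -
  have "bdd_below (neg_entropy A ` version_space A c \<delta> T)"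
    using neg_entropy_ge_minus_ln_card[OF A] unfolding version_space_def
    by (intro bdd_belowI2[of _ "- ln (real (card A))"]) auto
  then have "Inf (neg_entropy A ` version_space A c \<delta> T) \<le> neg_entropy A q"
    using q by (intro cInf_lower) auto
  with neg_entropy_max_entropy_fit_less_Inf[OF \<open>0 < \<delta>\<close>] q show ?thesis
    by fastforce
qed

lemma neg_entropy_gain:
  assumes A: "finite A" "A \<noteq> {}" and \<delta>: "0 < \<delta>"
    and c: "\<forall>a\<in>A. 0 \<le> c x a \<and> c x a \<le> 1"
    and consistent: "version_space A c \<delta> (insert (x, y) T) \<noteq> {}"
    and misfit: "misfit A c \<delta> T (x, y)"
  shows "neg_entropy A (max_entropy_fit A c \<delta> T) + \<delta>\<^sup>2 / 16
    \<le> neg_entropy A (max_entropy_fit A c \<delta> (insert (x, y) T))"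
proof -
  let ?q = "max_entropy_fit A c \<delta> T" and ?q' = "max_entropy_fit A c \<delta> (insert (x, y) T)"
  let ?gap = "\<Sum>a\<in>A. (?q a - ?q' a)\<^sup>2 / (?q a + ?q' a)"
  have sub: "version_space A c \<delta> (insert (x, y) T) \<subseteq> version_space A c \<delta> T"
    by (rule version_space_antimono) auto
  have q': "?q' \<in> version_space A c \<delta> (insert (x, y) T)"
    using max_entropy_fit_in_version_space[OF \<delta> consistent] .
  with sub have q: "?q \<in> version_space A c \<delta> T"
    using max_entropy_fit_in_version_space[OF \<delta>] by blast
  have "neg_entropy A ?q < neg_entropy A (\<lambda>a. (?q a + ?q' a) / 2) + \<delta>\<^sup>2 / 32"
    using q q' sub by (intro neg_entropy_max_entropy_fit_less[OF A \<delta>] version_space_midpoint) auto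
  moreover have "?gap / 4 \<le> neg_entropy A ?q + neg_entropy A ?q' - 2 * neg_entropy A (\<lambda>a. (?q a + ?q' a) / 2)"
    using q q' by (intro neg_entropy_midpoint_gap) (auto simp: version_space_def prob_simplex_def)
  moreover have "\<delta>\<^sup>2 / 2 < ?gap"
  proof -
    have "2 * \<delta> < \<bar>mixture A c ?q x - y\<bar>" and "\<bar>mixture A c ?q' x - y\<bar> \<le> \<delta>"
      using misfit q' unfolding misfit_def version_space_def by auto
    then have "\<delta> < \<bar>mixture A c ?q x - mixture A c ?q' x\<bar>"
      by linarith
    then have "\<delta>\<^sup>2 < (mixture A c ?q x - mixture A c ?q' x)\<^sup>2"
      using \<delta> power_strict_mono[of \<delta> "\<bar>mixture A c ?q x - mixture A c ?q' x\<bar>" 2] by simp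
    also have "\<dots> \<le> 2 * ?gap"
      using q q' c by (intro mixture_diff_squared_le) (auto simp: version_space_def)
    finally show ?thesis by simp
  qed
  ultimately show ?thesis
    by linarith
qed

lemma compress_step_no_misfit:
  "\<not> (\<exists>z\<in>S. misfit A c \<delta> T z) \<Longrightarrow> compress_step A c \<delta> S T = T"
  unfolding compress_step_def by simp

lemma compress_step_misfit:
  assumes "\<exists>z\<in>S. misfit A c \<delta> T z"
  obtains z where "z \<in> S" "misfit A c \<delta> T z" "compress_step A c \<delta> S T = insert z T"
proof -
  let ?z = "SOME z. z \<in> S \<and> misfit A c \<delta> T z"
  have "?z \<in> S \<and> misfit A c \<delta> T ?z"
    using assms by (metis (mono_tags, lifting) someI_ex)
  moreover have "compress_step A c \<delta> S T = insert ?z T"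
    using assms unfolding compress_step_def by simp
  ultimately show ?thesis
    using that by blast
qed

lemma compress_step_funpow:
  "(compress_step A c \<delta> S ^^ k) {} \<subseteq> S \<and> finite ((compress_step A c \<delta> S ^^ k) {}) \<and>
   card ((compress_step A c \<delta> S ^^ k) {}) \<le> k"
proof (induction k)
  case 0
  then show ?case by simp
next
  case (Suc k)
  let ?T = "(compress_step A c \<delta> S ^^ k) {}"
  show ?case
  proof (cases "\<exists>z\<in>S. misfit A c \<delta> ?T z")
    case True
    then obtain z where "z \<in> S" "compress_step A c \<delta> S ?T = insert z ?T"
      by (rule compress_step_misfit)
    with Suc.IH show ?thesis
      by (simp add: card_insert_if)
  next
    case False
    with Suc.IH show ?thesis
      by (simp add: compress_step_no_misfit)
  qed
qed

lemma compress_subset: "compress A c \<delta> S \<subseteq> S"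
  unfolding compress_def using compress_step_funpow by blast

lemma ln_card_nonneg: "0 \<le> ln (real (card A))"
  by (cases "card A = 0") auto

lemma card_compress_le: "real (card (compress A c \<delta> S)) \<le> 16 * ln (card A) / \<delta>\<^sup>2"
proof -
  have "card (compress A c \<delta> S) \<le> compress_rounds A \<delta>"
    unfolding compress_def using compress_step_funpow by blast
  moreover have "real (compress_rounds A \<delta>) \<le> 16 * ln (card A) / \<delta>\<^sup>2"
    unfolding compress_rounds_def using ln_card_nonneg[of A] by simp
  ultimately show ?thesis by linarith
qed

lemma ln_card_less_compress_rounds:
  assumes "0 < \<delta>"
  shows "ln (card A) < real (Suc (compress_rounds A \<delta>)) * (\<delta>\<^sup>2 / 16)"
proof -
  have "16 * ln (card A) / \<delta>\<^sup>2 < real (Suc (compress_rounds A \<delta>))"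
    unfolding compress_rounds_def using ln_card_nonneg[of A] by linarith
  then show ?thesis
    using assms by (simp add: field_simps)
qed

lemma neg_entropy_gain_funpow:
  assumes A: "finite A" "A \<noteq> {}" and \<delta>: "0 < \<delta>"
    and c: "\<forall>x\<in>X. \<forall>a\<in>A. 0 \<le> c x a \<and> c x a \<le> 1" and S: "S \<subseteq> X \<times> UNIV"
    and realizable: "version_space A c \<delta> S \<noteq> {}"
    and misfit: "\<exists>z\<in>S. misfit A c \<delta> ((compress_step A c \<delta> S ^^ k) {}) z"
  shows "neg_entropy A (max_entropy_fit A c \<delta> {}) + real (Suc k) * (\<delta>\<^sup>2 / 16)
    \<le> neg_entropy A (max_entropy_fit A c \<delta> ((compress_step A c \<delta> S ^^ Suc k) {}))"
proof -
  let ?T = "\<lambda>j. (compress_step A c \<delta> S ^^ j) {}"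
  let ?H = "\<lambda>j. neg_entropy A (max_entropy_fit A c \<delta> (?T j))"
  have gain: "?H j + \<delta>\<^sup>2 / 16 \<le> ?H (Suc j)" if misfit_j: "\<exists>z\<in>S. misfit A c \<delta> (?T j) z" for j
  proof -
    obtain z where "z \<in> S" "misfit A c \<delta> (?T j) z" "?T (Suc j) = insert z (?T j)"
      using compress_step_misfit[OF misfit_j] by auto
    moreover obtain x y where "z = (x, y)"
      by fastforce
    ultimately have z: "(x, y) \<in> S" "misfit A c \<delta> (?T j) (x, y)"
      and T: "?T (Suc j) = insert (x, y) (?T j)"
      by auto
    have "version_space A c \<delta> S \<subseteq> version_space A c \<delta> (insert (x, y) (?T j))"
      using z compress_step_funpow by (intro version_space_antimono) blast
    with realizable have "version_space A c \<delta> (insert (x, y) (?T j)) \<noteq> {}"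
      by blast
    with z c S show ?thesis
      unfolding T by (intro neg_entropy_gain[OF A \<delta>]) auto
  qed
  from misfit show ?thesis
  proof (induction k)
    case 0
    then show ?case using gain[of 0] by simp
  next
    case (Suc k)
    have misfit_k: "\<exists>z\<in>S. misfit A c \<delta> (?T k) z"
    proof (rule ccontr)
      assume "\<not> (\<exists>z\<in>S. misfit A c \<delta> (?T k) z)"
      then have "?T (Suc k) = ?T k"
        by (simp add: compress_step_no_misfit)
      with Suc.prems \<open>\<not> (\<exists>z\<in>S. misfit A c \<delta> (?T k) z)\<close> show False
        by simp
    qed
    show ?case
      using Suc.IH[OF misfit_k] gain[OF Suc.prems] by (simp only: of_nat_Suc distrib_right)
  qed
qed

lemma compress_no_misfit:
  assumes A: "finite A" "A \<noteq> {}" and \<delta>: "0 < \<delta>"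
    and c: "\<forall>x\<in>X. \<forall>a\<in>A. 0 \<le> c x a \<and> c x a \<le> 1" and S: "S \<subseteq> X \<times> UNIV"
    and realizable: "version_space A c \<delta> S \<noteq> {}" and z: "z \<in> S"
  shows "\<not> misfit A c \<delta> (compress A c \<delta> S) z"
proof
  let ?M = "compress_rounds A \<delta>"
  let ?T = "(compress_step A c \<delta> S ^^ Suc ?M) {}"
  assume "misfit A c \<delta> (compress A c \<delta> S) z"
  with z have "\<exists>z\<in>S. misfit A c \<delta> ((compress_step A c \<delta> S ^^ ?M) {}) z"
    unfolding compress_def by blast
  then have "neg_entropy A (max_entropy_fit A c \<delta> {}) + real (Suc ?M) * (\<delta>\<^sup>2 / 16)
      \<le> neg_entropy A (max_entropy_fit A c \<delta> ?T)"
    by (rule neg_entropy_gain_funpow[OF A \<delta> c S realizable])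
  moreover have "- ln (card A) \<le> neg_entropy A (max_entropy_fit A c \<delta> {})"
  proof -
    have "version_space A c \<delta> {} \<noteq> {}"
      using realizable version_space_antimono[of "{}" S] by blast
    then show ?thesis
      using max_entropy_fit_in_version_space[OF \<delta>]
      by (intro neg_entropy_ge_minus_ln_card[OF A]) (auto simp: version_space_def)
  qed
  moreover have "neg_entropy A (max_entropy_fit A c \<delta> ?T) \<le> 0"
  proof -
    have "version_space A c \<delta> ?T \<noteq> {}"
      using realizable version_space_antimono[of ?T S] compress_step_funpow by blast
    then show ?thesis
      using max_entropy_fit_in_version_space[OF \<delta>]
      by (intro neg_entropy_nonpos[OF A(1)]) (auto simp: version_space_def)
  qed
  ultimately show False
    using ln_card_less_compress_rounds[OF \<delta>, of A] by linarith
qed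

lemma reconstruct_nonneg: "0 \<le> reconstruct A c \<delta> T x"
  and reconstruct_le_one: "reconstruct A c \<delta> T x \<le> 1"
  unfolding reconstruct_def by auto

lemma abs_clamp_le:
  fixes v y :: real
  assumes "0 \<le> y" and "y \<le> 1"
  shows "\<bar>max 0 (min 1 v) - y\<bar> \<le> \<bar>v - y\<bar>"
  using assms by (auto simp: abs_if)

theorem reconstruct_compress_accurate:
  assumes A: "finite A" "A \<noteq> {}" and \<delta>: "0 < \<delta>"
    and c: "\<forall>x\<in>X. \<forall>a\<in>A. 0 \<le> c x a \<and> c x a \<le> 1"
    and p: "p \<in> prob_simplex A" and S: "S \<subseteq> X \<times> {0..1}"
    and noisy: "\<forall>(x, y)\<in>S. \<bar>y - mixture A c p x\<bar> \<le> \<delta>"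
    and xy: "(x, y) \<in> S"
  shows "\<bar>reconstruct A c \<delta> (compress A c \<delta> S) x - mixture A c p x\<bar> \<le> 3 * \<delta>"
proof -
  have "p \<in> version_space A c \<delta> S"
    using p noisy unfolding version_space_def by (auto simp: abs_minus_commute)
  with S xy have "\<not> misfit A c \<delta> (compress A c \<delta> S) (x, y)"
    by (intro compress_no_misfit[OF A \<delta> c]) auto
  then have "\<bar>reconstruct A c \<delta> (compress A c \<delta> S) x - y\<bar> \<le> 2 * \<delta>"
    using S xy abs_clamp_le[of y] unfolding misfit_def reconstruct_def by fastforce
  moreover have "\<bar>y - mixture A c p x\<bar> \<le> \<delta>"
    using noisy xy by auto
  ultimately show ?thesis by linarith
qed

section \<open>Pauli channels as mixtures of Bell-state features\<close>

lemma sum_lessThan_mult: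
  "(\<Sum>k < a * b. f k) = (\<Sum>i < a. \<Sum>j < b. f (i * b + j :: nat))"
proof -
  have "(\<Sum>k < a * b. f k) = (\<Sum>i < a. \<Sum>k \<in> {i * b..<i * b + b}. f k)"
    by (simp add: sum.nat_group)
  also have "\<dots> = (\<Sum>i < a. \<Sum>j < b. f (i * b + j))"
    using sum.shift_bounds_nat_ivl[of f 0 "_ * b" b] by (simp add: lessThan_atLeast0 add.commute)
  finally show ?thesis .
qed

lemma dim_mat_adjoint [simp]:
  "dim_row (mat_adjoint A) = dim_col A" "dim_col (mat_adjoint A) = dim_row A"
  unfolding mat_adjoint_def by auto

lemma index_mat_adjoint [simp]:
  "i < dim_col A \<Longrightarrow> j < dim_row A \<Longrightarrow> mat_adjoint A $$ (i, j) = cnj (A $$ (j, i))"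
  unfolding mat_adjoint_def by (simp add: mat_of_rows_index)

lemma index_mult_mat_sum:
  "i < dim_row A \<Longrightarrow> j < dim_col B \<Longrightarrow> dim_col A = dim_row B \<Longrightarrow>
    (A * B) $$ (i, j) = (\<Sum>t < dim_row B. A $$ (i, t) * B $$ (t, j))"
  by (simp add: scalar_prod_def lessThan_atLeast0)

definition unitary :: "nat \<Rightarrow> complex mat \<Rightarrow> bool" where
  "unitary d M \<longleftrightarrow> M \<in> carrier_mat d d \<and> mat_adjoint M * M = 1\<^sub>m d"

lemma unitary_iff_columns:
  "unitary d M \<longleftrightarrow> M \<in> carrier_mat d d \<and>
    (\<forall>i<d. \<forall>j<d. (\<Sum>k<d. cnj (M $$ (k, i)) * M $$ (k, j)) = (if i = j then 1 else 0))"
proof (cases "M \<in> carrier_mat d d")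
  case True
  have entry: "(mat_adjoint M * M) $$ (i, j) = (\<Sum>k<d. cnj (M $$ (k, i)) * M $$ (k, j))"
    if "i < d" "j < d" for i j
    using True that by (subst index_mult_mat_sum) auto
  have "mat_adjoint M * M = 1\<^sub>m d \<longleftrightarrow> (\<forall>i<d. \<forall>j<d. (mat_adjoint M * M) $$ (i, j) = 1\<^sub>m d $$ (i, j))"
  proof
    assume "\<forall>i<d. \<forall>j<d. (mat_adjoint M * M) $$ (i, j) = 1\<^sub>m d $$ (i, j)"
    then show "mat_adjoint M * M = 1\<^sub>m d"
      using True by (intro eq_matI) auto
  qed simp
  with True entry show ?thesis
    unfolding unitary_def by (simp del: index_mult_mat)
qed (simp add: unitary_def)

lemma unitary_carrier: "unitary d M \<Longrightarrow> M \<in> carrier_mat d d"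
  unfolding unitary_def by simp

lemma mult_add_less_mult:
  fixes i j a b :: nat
  assumes "i < a" and "j < b"
  shows "i * b + j < a * b"
proof -
  have "i * b + j < (i + 1) * b"
    using assms(2) by simp
  also have "\<dots> \<le> a * b"
    using assms(1) by (intro mult_right_mono) auto
  finally show ?thesis .
qed

lemma dim_kron [simp]:
  "dim_row (kron A B) = dim_row A * dim_row B" "dim_col (kron A B) = dim_col A * dim_col B"
  unfolding kron_def by auto

lemma index_kron:
  "i < dim_row A * dim_row B \<Longrightarrow> j < dim_col A * dim_col B \<Longrightarrow>
    kron A B $$ (i, j) = A $$ (i div dim_row B, j div dim_col B) * B $$ (i mod dim_row B, j mod dim_col B)"
  unfolding kron_def by auto

lemma eq_of_div_mod_eq:
  fixes i j d :: nat
  assumes "i div d = j div d" and "i mod d = j mod d"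
  shows "i = j"
proof -
  have "i = i div d * d + i mod d"
    by simp
  also have "\<dots> = j"
    using assms by simp
  finally show ?thesis .
qed

lemma sum_cnj_kron_columns:
  assumes A: "A \<in> carrier_mat d1 d1" and B: "B \<in> carrier_mat d2 d2"
    and i: "i < d1 * d2" and j: "j < d1 * d2"
  shows "(\<Sum>k < d1 * d2. cnj (kron A B $$ (k, i)) * kron A B $$ (k, j))
    = (\<Sum>k<d1. cnj (A $$ (k, i div d2)) * A $$ (k, j div d2)) *
      (\<Sum>k<d2. cnj (B $$ (k, i mod d2)) * B $$ (k, j mod d2))"
proof -
  have "(\<Sum>k < d1 * d2. cnj (kron A B $$ (k, i)) * kron A B $$ (k, j))
      = (\<Sum>k1<d1. \<Sum>k2<d2. cnj (kron A B $$ (k1 * d2 + k2, i)) * kron A B $$ (k1 * d2 + k2, j))"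
    by (rule sum_lessThan_mult)
  also have "\<dots> = (\<Sum>k1<d1. \<Sum>k2<d2. (cnj (A $$ (k1, i div d2)) * A $$ (k1, j div d2)) *
      (cnj (B $$ (k2, i mod d2)) * B $$ (k2, j mod d2)))"
  proof (intro sum.cong refl)
    fix k1 k2
    assume "k1 \<in> {..<d1}" and "k2 \<in> {..<d2}"
    then have "k1 * d2 + k2 < d1 * d2" and "(k1 * d2 + k2) div d2 = k1" and "(k1 * d2 + k2) mod d2 = k2"
      using mult_add_less_mult[of k1 d1 k2 d2] by auto
    with i j A B show "cnj (kron A B $$ (k1 * d2 + k2, i)) * kron A B $$ (k1 * d2 + k2, j)
      = (cnj (A $$ (k1, i div d2)) * A $$ (k1, j div d2)) * (cnj (B $$ (k2, i mod d2)) * B $$ (k2, j mod d2))"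
      by (simp add: index_kron mult_ac)
  qed
  also have "\<dots> = (\<Sum>k<d1. cnj (A $$ (k, i div d2)) * A $$ (k, j div d2)) *
      (\<Sum>k<d2. cnj (B $$ (k, i mod d2)) * B $$ (k, j mod d2))"
    by (simp add: sum_product)
  finally show ?thesis .
qed

lemma unitary_kron:
  assumes A: "unitary d1 A" and B: "unitary d2 B"
  shows "unitary (d1 * d2) (kron A B)"
  unfolding unitary_iff_columns
proof (intro conjI allI impI)
  have cA: "A \<in> carrier_mat d1 d1" and cB: "B \<in> carrier_mat d2 d2"
    using A B by (auto simp: unitary_def)
  then show "kron A B \<in> carrier_mat (d1 * d2) (d1 * d2)"
    by auto
  fix i j
  assume i: "i < d1 * d2" and j: "j < d1 * d2"
  then have "0 < d2"
    by (cases "d2 = 0") auto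
  with i j have div_mod: "i div d2 < d1" "j div d2 < d1" "i mod d2 < d2" "j mod d2 < d2"
    by (auto simp: less_mult_imp_div_less)
  have "(\<Sum>k < d1 * d2. cnj (kron A B $$ (k, i)) * kron A B $$ (k, j))
      = (if i div d2 = j div d2 then 1 else 0) * (if i mod d2 = j mod d2 then 1 else 0)"
    using A B div_mod unfolding sum_cnj_kron_columns[OF cA cB i j] unitary_iff_columns by auto
  also have "\<dots> = (if i = j then 1 else 0)"
    using eq_of_div_mod_eq[of i d2 j] by auto
  finally show "(\<Sum>k < d1 * d2. cnj (kron A B $$ (k, i)) * kron A B $$ (k, j)) = (if i = j then 1 else 0)" .
qed

lemma unitary_smult:
  assumes M: "unitary d M" and c: "cnj c * c = 1"
  shows "unitary d (c \<cdot>\<^sub>m M)"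
  unfolding unitary_iff_columns
proof (intro conjI allI impI)
  have cM: "M \<in> carrier_mat d d"
    using M by (rule unitary_carrier)
  then show "c \<cdot>\<^sub>m M \<in> carrier_mat d d"
    by simp
  fix i j
  assume ij: "i < d" "j < d"
  have "(\<Sum>k<d. cnj ((c \<cdot>\<^sub>m M) $$ (k, i)) * (c \<cdot>\<^sub>m M) $$ (k, j))
      = (\<Sum>k<d. cnj c * c * (cnj (M $$ (k, i)) * M $$ (k, j)))"
    using cM ij by (intro sum.cong) (auto simp: algebra_simps)
  also have "\<dots> = (if i = j then 1 else 0)"
    using M c ij unfolding unitary_iff_columns by simp
  finally show "(\<Sum>k<d. cnj ((c \<cdot>\<^sub>m M) $$ (k, i)) * (c \<cdot>\<^sub>m M) $$ (k, j)) = (if i = j then 1 else 0)" .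
qed

lemma pauli_Z_mult_pauli_X:
  "pauli_Z * pauli_X = mat 2 2 (\<lambda>(i, j). if i = j then 0 else if i = 0 then 1 else -1)"
  by (rule eq_matI)
    (auto simp: pauli_Z_def pauli_X_def scalar_prod_def numeral_2_eq_2 lessThan_atLeast0[symmetric])

lemma unitary_2_iff:
  "unitary 2 M \<longleftrightarrow> M \<in> carrier_mat 2 2 \<and>
    cnj (M $$ (0, 0)) * M $$ (0, 0) + cnj (M $$ (1, 0)) * M $$ (1, 0) = 1 \<and>
    cnj (M $$ (0, 1)) * M $$ (0, 1) + cnj (M $$ (1, 1)) * M $$ (1, 1) = 1 \<and>
    cnj (M $$ (0, 0)) * M $$ (0, 1) + cnj (M $$ (1, 0)) * M $$ (1, 1) = 0 \<and>
    cnj (M $$ (0, 1)) * M $$ (0, 0) + cnj (M $$ (1, 1)) * M $$ (1, 0) = 0"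
proof -
  have "(\<forall>i<2. P i) \<longleftrightarrow> P 0 \<and> P 1" for P :: "nat \<Rightarrow> bool"
    by (auto simp: less_2_cases_iff)
  moreover have "(\<Sum>k<2. f k) = f 0 + f 1" for f :: "nat \<Rightarrow> complex"
    by (simp add: numeral_2_eq_2)
  ultimately show ?thesis
    unfolding unitary_iff_columns by auto
qed

lemma unitary_pauli_factor:
  "unitary 2 ((if z then pauli_Z else 1\<^sub>m 2) * (if x then pauli_X else 1\<^sub>m 2))"
  unfolding unitary_2_iff
  by (cases z; cases x) (simp_all add: pauli_Z_mult_pauli_X, auto simp: pauli_Z_def pauli_X_def)

lemma cnj_ii_power_mult_self: "cnj (\<i> ^ k) * \<i> ^ k = 1"
  unfolding complex_cnj_power power_mult_distrib[symmetric] by simp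

lemma unitary_ZX: "length x = length z \<Longrightarrow> unitary (2 ^ length z) (ZX z x)"
proof (induction z arbitrary: x)
  case Nil
  then show ?case
    by (simp add: unitary_iff_columns)
next
  case (Cons b z)
  then obtain b' x' where x: "x = b' # x'" and len: "length x' = length z"
    by (cases x) auto
  show ?case
    using unitary_kron[OF unitary_pauli_factor Cons.IH[OF len]]
    unfolding x by (simp only: ZX.simps(1) length_Cons power_Suc)
qed

lemma unitary_pauli_op:
  assumes "length z = n" and "length x = n"
  shows "unitary (2 ^ n) (pauli_op z x)"
  using unitary_smult[OF unitary_ZX[of x z] cnj_ii_power_mult_self] assms unfolding pauli_op_def by simp

lemma pauli_idx_eq: "pauli_idx n = {z. length z = n} \<times> {x. length x = n}"
  unfolding pauli_idx_def by auto

lemma finite_pauli_idx: "finite (pauli_idx n)"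
  unfolding pauli_idx_eq using finite_lists_length_eq[of "UNIV :: bool set" n] by simp

lemma card_pauli_idx: "card (pauli_idx n) = 4 ^ n"
proof -
  have "card {z :: bool list. length z = n} = 2 ^ n"
    using card_lists_length_eq[of "UNIV :: bool set" n] by simp
  then show ?thesis
    unfolding pauli_idx_eq card_cartesian_product by (simp add: power_mult_distrib[symmetric])
qed

lemma pauli_channels_eq_prob_simplex: "pauli_channels n = prob_simplex (pauli_idx n)"
  unfolding pauli_channels_def prob_simplex_def by simp

lemma unitary_pauli_idx: "a \<in> pauli_idx n \<Longrightarrow> unitary (2 ^ n) (case_prod pauli_op a)"
  unfolding pauli_idx_def by (auto intro: unitary_pauli_op)

lemma pauli_op_carrier: "(z, x) \<in> pauli_idx n \<Longrightarrow> pauli_op z x \<in> carrier_mat (2 ^ n) (2 ^ n)"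
  using unitary_carrier[OF unitary_pauli_idx] by fastforce

text \<open>Column stacking: vectorize d M = (1 \<otimes> M) \<Sum>i. |i\<rangle>|i\<rangle>.\<close>
definition vectorize :: "nat \<Rightarrow> complex mat \<Rightarrow> complex vec" where
  "vectorize d M = vec (d * d) (\<lambda>r. M $$ (r mod d, r div d))"

definition bell_value :: "nat \<Rightarrow> complex mat \<Rightarrow> bool list \<times> bool list \<Rightarrow> real" where
  "bell_value n E a =
     Re ((E *\<^sub>v vectorize (2 ^ n) (case_prod pauli_op a)) \<bullet>c vectorize (2 ^ n) (case_prod pauli_op a))"

lemma dim_vectorize [simp]: "dim_vec (vectorize d M) = d * d"
  unfolding vectorize_def by simp

lemma vectorize_carrier [simp]: "vectorize d M \<in> carrier_vec (d * d)"
  unfolding vectorize_def by simp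

lemma vectorize_index:
  assumes "i < d" and "k < d"
  shows "vectorize d M $ (i * d + k) = M $$ (k, i)"
  using assms mult_add_less_mult[OF assms(1,2)] by (simp add: vectorize_def)

lemma scalar_prod_vectorize:
  "vectorize d A \<bullet>c vectorize d B = (\<Sum>i<d. \<Sum>k<d. A $$ (k, i) * cnj (B $$ (k, i)))"
  by (simp add: scalar_prod_def atLeast0LessThan sum_lessThan_mult vectorize_index
      mult_add_less_mult)

lemma kron_one_mult_vectorize:
  assumes \<sigma>: "\<sigma> \<in> carrier_mat d d" and M: "M \<in> carrier_mat d d"
  shows "kron \<sigma> (1\<^sub>m d) *\<^sub>v vectorize d M = vectorize d (M * transpose_mat \<sigma>)"
proof (rule eq_vecI)
  fix r
  assume "r < dim_vec (vectorize d (M * transpose_mat \<sigma>))"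
  then have r: "r < d * d" by simp
  define i k where "i = r div d" and "k = r mod d"
  have "0 < d"
    using r by (cases "d = 0") auto
  with r have ik: "i < d" "k < d" and r_eq: "r = i * d + k"
    unfolding i_def k_def by (auto simp: less_mult_imp_div_less)
  have entry: "kron \<sigma> (1\<^sub>m d) $$ (r, j * d + l) = (if l = k then \<sigma> $$ (i, j) else 0)"
    if "j < d" "l < d" for j l
    using that r \<sigma> mult_add_less_mult[OF that] unfolding i_def k_def by (auto simp: index_kron)
  have "(kron \<sigma> (1\<^sub>m d) *\<^sub>v vectorize d M) $ r
      = (\<Sum>j<d. \<Sum>l<d. kron \<sigma> (1\<^sub>m d) $$ (r, j * d + l) * vectorize d M $ (j * d + l))"
    using r \<sigma> by (simp add: scalar_prod_def atLeast0LessThan sum_lessThan_mult)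
  also have "\<dots> = (\<Sum>j<d. \<Sum>l<d. if l = k then \<sigma> $$ (i, j) * M $$ (k, j) else 0)"
    by (intro sum.cong refl) (simp add: entry vectorize_index)
  also have "\<dots> = (\<Sum>j<d. \<sigma> $$ (i, j) * M $$ (k, j))"
    using ik by simp
  also have "\<dots> = (M * transpose_mat \<sigma>) $$ (k, i)"
    using ik \<sigma> M by (simp add: index_mult_mat_sum mult.commute del: index_mult_mat)
  also have "\<dots> = vectorize d (M * transpose_mat \<sigma>) $ r"
    unfolding r_eq using ik by (simp add: vectorize_index)
  finally show "(kron \<sigma> (1\<^sub>m d) *\<^sub>v vectorize d M) $ r = vectorize d (M * transpose_mat \<sigma>) $ r" .
qed (use \<sigma> in simp)

lemma unitary_adjoint_mult_vec_sum:
  assumes M: "unitary d M" and i: "i < d"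
  shows "(\<Sum>k<d. (\<Sum>j<d. M $$ (k, j) * x j) * cnj (M $$ (k, i))) = x i"
proof -
  have "(\<Sum>k<d. (\<Sum>j<d. M $$ (k, j) * x j) * cnj (M $$ (k, i)))
      = (\<Sum>k<d. \<Sum>j<d. x j * (cnj (M $$ (k, i)) * M $$ (k, j)))"
    by (simp only: sum_distrib_right) (simp add: mult_ac)
  also have "\<dots> = (\<Sum>j<d. \<Sum>k<d. x j * (cnj (M $$ (k, i)) * M $$ (k, j)))"
    by (rule sum.swap)
  also have "\<dots> = (\<Sum>j<d. x j * (\<Sum>k<d. cnj (M $$ (k, i)) * M $$ (k, j)))"
    by (simp add: sum_distrib_left)
  also have "\<dots> = (\<Sum>j<d. if i = j then x j else 0)"
    using M i unfolding unitary_iff_columns by (intro sum.cong refl) auto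
  finally show ?thesis
    using i by simp
qed

lemma quadratic_form_kron_one_vectorize:
  assumes M: "unitary d M" and \<sigma>: "\<sigma> \<in> carrier_mat d d"
  shows "(kron \<sigma> (1\<^sub>m d) *\<^sub>v vectorize d M) \<bullet>c vectorize d M = mat_trace \<sigma>"
proof -
  have cM: "M \<in> carrier_mat d d"
    using M by (rule unitary_carrier)
  have "(kron \<sigma> (1\<^sub>m d) *\<^sub>v vectorize d M) \<bullet>c vectorize d M
      = (\<Sum>i<d. \<Sum>k<d. (\<Sum>j<d. M $$ (k, j) * \<sigma> $$ (i, j)) * cnj (M $$ (k, i)))"
    using cM \<sigma> by (simp add: kron_one_mult_vectorize scalar_prod_vectorize index_mult_mat_sum del: index_mult_mat)
  also have "\<dots> = (\<Sum>i<d. \<sigma> $$ (i, i))"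
    using M by (intro sum.cong refl) (simp add: unitary_adjoint_mult_vec_sum)
  also have "\<dots> = mat_trace \<sigma>"
    using \<sigma> unfolding mat_trace_def by simp
  finally show ?thesis .
qed

lemma bell_value_nonneg: "E \<in> test_ops n \<Longrightarrow> 0 \<le> bell_value n E a"
  unfolding test_ops_def psd_def bell_value_def by auto

lemma bell_value_le_one:
  assumes E: "E \<in> test_ops n" and a: "a \<in> pauli_idx n"
  shows "bell_value n E a \<le> 1"
proof -
  let ?D = "2 ^ n * 2 ^ n" and ?w = "vectorize (2 ^ n) (case_prod pauli_op a)"
  obtain \<sigma> where \<sigma>: "density_op (2 ^ n) \<sigma>" and E_le: "loewner_le ?D E (kron \<sigma> (1\<^sub>m (2 ^ n)))"
    using E unfolding test_ops_def by blast
  have cE: "E \<in> carrier_mat ?D ?D"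
    using E_le unfolding loewner_le_def by simp
  have c\<sigma>: "\<sigma> \<in> carrier_mat (2 ^ n) (2 ^ n)" and tr: "mat_trace \<sigma> = 1"
    using \<sigma> unfolding density_op_def psd_def by auto
  have cK: "kron \<sigma> (1\<^sub>m (2 ^ n)) \<in> carrier_mat ?D ?D"
    using c\<sigma> by auto
  have "0 \<le> Re (((kron \<sigma> (1\<^sub>m (2 ^ n)) - E) *\<^sub>v ?w) \<bullet>c ?w)"
    using E_le unfolding loewner_le_def psd_def by auto
  also have "((kron \<sigma> (1\<^sub>m (2 ^ n)) - E) *\<^sub>v ?w) \<bullet>c ?w = (kron \<sigma> (1\<^sub>m (2 ^ n)) *\<^sub>v ?w) \<bullet>c ?w - (E *\<^sub>v ?w) \<bullet>c ?w"
    using cK cE by (simp add: minus_mult_distrib_mat_vec[OF cK cE] minus_scalar_prod_distrib[of _ ?D])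
  also have "(kron \<sigma> (1\<^sub>m (2 ^ n)) *\<^sub>v ?w) \<bullet>c ?w = 1"
    using quadratic_form_kron_one_vectorize[OF unitary_pauli_idx[OF a] c\<sigma>] tr by simp
  finally show ?thesis
    unfolding bell_value_def by simp
qed

lemma dim_ketbra [simp]: "dim_row (ketbra d i j) = d" "dim_col (ketbra d i j) = d"
  unfolding ketbra_def by auto

lemma index_ketbra [simp]:
  "a < d \<Longrightarrow> b < d \<Longrightarrow> ketbra d i j $$ (a, b) = (if a = i \<and> b = j then 1 else 0)"
  unfolding ketbra_def by auto

lemma dim_pauli_apply [simp]:
  "dim_row (pauli_apply n p \<rho>) = 2 ^ n" "dim_col (pauli_apply n p \<rho>) = 2 ^ n"
  unfolding pauli_apply_def msum_def by auto

lemma sandwich_ketbra_index: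
  assumes M: "M \<in> carrier_mat d d" and "i < d" "j < d" "k < d" "l < d"
  shows "(M * ketbra d i j * mat_adjoint M) $$ (k, l) = M $$ (k, i) * cnj (M $$ (l, j))"
proof -
  have MK: "(M * ketbra d i j) $$ (k, m) = (if m = j then M $$ (k, i) else 0)" if "m < d" for m
  proof -
    have "(M * ketbra d i j) $$ (k, m) = (\<Sum>t<d. M $$ (k, t) * ketbra d i j $$ (t, m))"
      using assms that by (simp add: index_mult_mat_sum del: index_mult_mat)
    also have "\<dots> = (\<Sum>t<d. if t = i then (if m = j then M $$ (k, i) else 0) else 0)"
      using that by (intro sum.cong) auto
    finally show ?thesis
      using assms by simp
  qed
  have "(M * ketbra d i j * mat_adjoint M) $$ (k, l)
      = (\<Sum>m<d. (M * ketbra d i j) $$ (k, m) * mat_adjoint M $$ (m, l))"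
    using assms by (subst index_mult_mat_sum) auto
  also have "\<dots> = (\<Sum>m<d. if m = j then M $$ (k, i) * cnj (M $$ (l, j)) else 0)"
    using assms by (intro sum.cong) (auto simp: MK simp del: index_mult_mat)
  finally show ?thesis
    using assms by simp
qed

lemma pauli_apply_ketbra_index:
  assumes "i < 2 ^ n" "j < 2 ^ n" "k < 2 ^ n" "l < 2 ^ n"
  shows "pauli_apply n p (ketbra (2 ^ n) i j) $$ (k, l) = (\<Sum>a\<in>pauli_idx n.
    complex_of_real (p a) * (case_prod pauli_op a $$ (k, i) * cnj (case_prod pauli_op a $$ (l, j))))"
  unfolding pauli_apply_def msum_def using assms(3,4)
proof (simp, intro sum.cong refl)
  fix a
  assume "a \<in> pauli_idx n"
  moreover obtain z x where a: "a = (z, x)"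
    by fastforce
  ultimately have "pauli_op z x \<in> carrier_mat (2 ^ n) (2 ^ n)"
    by (simp add: pauli_op_carrier)
  with assms show "(case a of (z, x) \<Rightarrow> complex_of_real (p (z, x)) \<cdot>\<^sub>m
      (pauli_op z x * ketbra (2 ^ n) i j * mat_adjoint (pauli_op z x))) $$ (k, l) =
    complex_of_real (p a) * (case_prod pauli_op a $$ (k, i) * cnj (case_prod pauli_op a $$ (l, j)))"
    unfolding a by (simp del: index_mult_mat add: index_mult_mat(2,3) sandwich_ketbra_index)
qed

lemma dim_choi [simp]: "dim_row (choi n p) = 2 ^ n * 2 ^ n" "dim_col (choi n p) = 2 ^ n * 2 ^ n"
  unfolding choi_def msum_def by auto

lemma choi_index:
  assumes r: "r < 2 ^ n * 2 ^ n" and s: "s < 2 ^ n * 2 ^ n"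
  shows "choi n p $$ (r, s) = (\<Sum>a\<in>pauli_idx n. complex_of_real (p a) *
    (vectorize (2 ^ n) (case_prod pauli_op a) $ r * cnj (vectorize (2 ^ n) (case_prod pauli_op a) $ s)))"
proof -
  let ?d = "2 ^ n :: nat"
  have rs: "r div ?d < ?d" "s div ?d < ?d" "r mod ?d < ?d" "s mod ?d < ?d"
    using r s by (auto simp: less_mult_imp_div_less)
  have "choi n p $$ (r, s) = (\<Sum>(i, j)\<in>{..<?d} \<times> {..<?d}.
      kron (ketbra ?d i j) (pauli_apply n p (ketbra ?d i j)) $$ (r, s))"
    unfolding choi_def msum_def using r s by (simp add: split_def)
  also have "\<dots> = (\<Sum>ij\<in>{..<?d} \<times> {..<?d}. if ij = (r div ?d, s div ?d)
      then pauli_apply n p (ketbra ?d (r div ?d) (s div ?d)) $$ (r mod ?d, s mod ?d) else 0)"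
    using r s rs by (intro sum.cong refl) (auto simp: index_kron split: if_split_asm)
  also have "\<dots> = pauli_apply n p (ketbra ?d (r div ?d) (s div ?d)) $$ (r mod ?d, s mod ?d)"
    using rs by (simp add: sum.delta')
  also have "\<dots> = (\<Sum>a\<in>pauli_idx n. complex_of_real (p a) *
      (case_prod pauli_op a $$ (r mod ?d, r div ?d) * cnj (case_prod pauli_op a $$ (s mod ?d, s div ?d))))"
    using rs by (rule pauli_apply_ketbra_index)
  also have "\<dots> = (\<Sum>a\<in>pauli_idx n. complex_of_real (p a) *
      (vectorize ?d (case_prod pauli_op a) $ r * cnj (vectorize ?d (case_prod pauli_op a) $ s)))"
    using r s by (simp add: vectorize_def)
  finally show ?thesis .
qed

lemma f_pauli_eq_mixture:
  assumes E: "E \<in> carrier_mat (2 ^ n * 2 ^ n) (2 ^ n * 2 ^ n)"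
  shows "f_pauli n p E = mixture (pauli_idx n) (bell_value n) p E"
proof -
  let ?D = "2 ^ n * 2 ^ n :: nat" and ?w = "\<lambda>a. vectorize (2 ^ n) (case_prod pauli_op a)"
  have "mat_trace (E * choi n p) = (\<Sum>r<?D. (E * choi n p) $$ (r, r))"
    unfolding mat_trace_def using E by simp
  also have "\<dots> = (\<Sum>r<?D. \<Sum>s<?D. E $$ (r, s) * choi n p $$ (s, r))"
    using E by (intro sum.cong refl) (simp add: index_mult_mat_sum del: index_mult_mat)
  also have "\<dots> = (\<Sum>r<?D. \<Sum>s<?D. \<Sum>a\<in>pauli_idx n.
      complex_of_real (p a) * (E $$ (r, s) * ?w a $ s * cnj (?w a $ r)))"
    by (intro sum.cong refl) (simp add: choi_index sum_distrib_left mult_ac)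
  also have "\<dots> = (\<Sum>a\<in>pauli_idx n. \<Sum>r<?D. \<Sum>s<?D.
      complex_of_real (p a) * (E $$ (r, s) * ?w a $ s * cnj (?w a $ r)))"
    by (simp only: sum.swap[of _ "{..<?D}" "pauli_idx n"])
  also have "\<dots> = (\<Sum>a\<in>pauli_idx n. complex_of_real (p a) *
      (\<Sum>r<?D. (\<Sum>s<?D. E $$ (r, s) * ?w a $ s) * cnj (?w a $ r)))"
    by (simp add: sum_distrib_left sum_distrib_right)
  also have "\<dots> = (\<Sum>a\<in>pauli_idx n. complex_of_real (p a) * ((E *\<^sub>v ?w a) \<bullet>c ?w a))"
    using E by (simp add: scalar_prod_def atLeast0LessThan)
  finally show ?thesis
    unfolding f_pauli_def mixture_def bell_value_def by (simp add: Re_sum)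
qed

section \<open>Sample compression for Pauli channels\<close>

lemma card_compress_pauli_le:
  assumes "0 < \<epsilon>"
  shows "real (card (compress (pauli_idx n) c (\<epsilon> / 3) S)) \<le> 432 * real n / \<epsilon>\<^sup>2"
proof -
  have "ln (real (card (pauli_idx n))) = real n * ln 4"
    by (simp add: card_pauli_idx ln_realpow)
  also have "\<dots> \<le> real n * 3"
    using ln_le_minus_one[of "4::real"] by (intro mult_left_mono) auto
  finally have ln_card: "ln (real (card (pauli_idx n))) \<le> 3 * real n"
    by simp
  have "real (card (compress (pauli_idx n) c (\<epsilon> / 3) S)) \<le> 16 * ln (card (pauli_idx n)) / (\<epsilon> / 3)\<^sup>2"
    by (rule card_compress_le)
  also have "\<dots> = 144 * ln (card (pauli_idx n)) / \<epsilon>\<^sup>2"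
    by (simp add: power_divide)
  also have "\<dots> \<le> 144 * (3 * real n) / \<epsilon>\<^sup>2"
    using ln_card by (intro divide_right_mono mult_left_mono) auto
  finally show ?thesis
    by simp
qed

lemma pauli_reconstruct_compress_accurate:
  assumes \<epsilon>: "0 < \<epsilon>" and p: "p \<in> pauli_channels n" and S: "S \<subseteq> test_ops n \<times> {0..1}"
    and noisy: "\<forall>(E, y)\<in>S. \<bar>y - f_pauli n p E\<bar> \<le> \<epsilon> / 3"
  shows "\<forall>(E, y)\<in>S. \<bar>reconstruct (pauli_idx n) (bell_value n) (\<epsilon> / 3)
    (compress (pauli_idx n) (bell_value n) (\<epsilon> / 3) S) E - f_pauli n p E\<bar> \<le> \<epsilon>"
proof -
  have f_eq: "f_pauli n p E = mixture (pauli_idx n) (bell_value n) p E" if "E \<in> test_ops n" for E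
    using that f_pauli_eq_mixture by (simp add: test_ops_def psd_def)
  have A: "pauli_idx n \<noteq> {}"
    using card_pauli_idx[of n] by auto
  have c: "\<forall>E\<in>test_ops n. \<forall>a\<in>pauli_idx n. 0 \<le> bell_value n E a \<and> bell_value n E a \<le> 1"
    using bell_value_nonneg bell_value_le_one by blast
  have p': "p \<in> prob_simplex (pauli_idx n)"
    using p by (simp add: pauli_channels_eq_prob_simplex)
  have noisy': "\<forall>(E, y)\<in>S. \<bar>y - mixture (pauli_idx n) (bell_value n) p E\<bar> \<le> \<epsilon> / 3"
    using noisy S f_eq by fastforce
  have "\<bar>reconstruct (pauli_idx n) (bell_value n) (\<epsilon> / 3)
      (compress (pauli_idx n) (bell_value n) (\<epsilon> / 3) S) E - mixture (pauli_idx n) (bell_value n) p E\<bar> \<le> \<epsilon>"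
    if "(E, y) \<in> S" for E y
    using reconstruct_compress_accurate[OF finite_pauli_idx A _ c p' S noisy' that] \<epsilon> by simp
  then show ?thesis
    using S f_eq by fastforce
qed

theorem corollary3p17:
  "\<exists>C :: real. 0 < C \<and> (\<forall>(n::nat) (\<epsilon>::real). 0 < \<epsilon> \<and> \<epsilon> < 1 \<longrightarrow>
     (\<exists>(\<kappa> :: (complex mat \<times> real) set \<Rightarrow> (complex mat \<times> real) set)
        (\<rho> :: (complex mat \<times> real) set \<Rightarrow> complex mat \<Rightarrow> real).
        (\<forall>S. finite S \<and> S \<subseteq> test_ops n \<times> {0..1} \<longrightarrow>
            \<kappa> S \<subseteq> S \<and> real (card (\<kappa> S)) \<le> C * real n / \<epsilon>^2 \<and>
            (\<forall>E \<in> test_ops n. 0 \<le> \<rho> (\<kappa> S) E \<and> \<rho> (\<kappa> S) E \<le> 1)) \<and>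
        (\<forall>p \<in> pauli_channels n. \<forall>S. finite S \<and> S \<subseteq> test_ops n \<times> {0..1} \<longrightarrow>
            (\<forall>(E, y) \<in> S. y = f_pauli n p E) \<longrightarrow>
            (\<forall>(E, y) \<in> S. \<bar>\<rho> (\<kappa> S) E - f_pauli n p E\<bar> \<le> \<epsilon>)) \<and>
        (\<forall>p \<in> pauli_channels n. \<forall>S. finite S \<and> S \<subseteq> test_ops n \<times> {0..1} \<longrightarrow>
            (\<forall>(E, y) \<in> S. \<bar>y - f_pauli n p E\<bar> \<le> \<epsilon> / 3) \<longrightarrow>
            (\<forall>(E, y) \<in> S. \<bar>\<rho> (\<kappa> S) E - f_pauli n p E\<bar> \<le> \<epsilon>))))"
proof (intro exI[of _ "432::real"] conjI allI impI, goal_cases)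
  case 1
  show ?case by simp
next
  case (2 n \<epsilon>)
  then have \<epsilon>: "0 < \<epsilon>" by simp
  show ?case
  proof (intro exI[of _ "compress (pauli_idx n) (bell_value n) (\<epsilon> / 3)"]
      exI[of _ "reconstruct (pauli_idx n) (bell_value n) (\<epsilon> / 3)"] conjI, goal_cases)
    case 1
    show ?case
      by (intro allI impI conjI ballI)
        (simp_all add: compress_subset card_compress_pauli_le[OF \<epsilon>] reconstruct_nonneg reconstruct_le_one)
  next
    case 2
    show ?case
      by (rule ballI, rule allI, rule impI, rule impI, rule pauli_reconstruct_compress_accurate[OF \<epsilon>])
        (use \<epsilon> in auto)
  next
    case 3
    show ?case
      by (rule ballI, rule allI, rule impI, rule impI, rule pauli_reconstruct_compress_accurate[OF \<epsilon>]) auto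
  qed
qed

end
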